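(* Let $F(n)$ be the Fibonacci sequence, $F(0)=0$, $F(1)=1$, $F(n+2)=F(n+1)+F(n)$. Then $$\lim_{\alpha\to\infty}\frac{|\{F(n)\bmod 11^\alpha:n\ge0\}|}{11^\alpha}=\frac{145}{264}.$$ *)

theory Defs
  imports Complex_Main "HOL-Number_Theory.Fib"
begin

end

theory Submission
  imports Defs "HOL-Number_Theory.Number_Theory"
begin

text \<open>Modulo 11^a (a \<ge> 2) the polynomial \<phi>^2 - \<phi> - 1 has a root \<phi> \<equiv> 85 (mod 121), and this
  root is a primitive root modulo 11^a. By Binet's formula, F_i \<equiv> x holds as soon as
  u = \<phi>^i solves u^2 - (2\<phi> - 1) x u - (-1)^i \<equiv> 0; since every unit is a power of \<phi> and the
  parity of i is read off from the quadratic character of u, x is a Fibonacci residue iff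
  this quadratic has a root of the right character. Completing the square, this depends
  only on x mod 11, except for x \<equiv> 5, where 5 x^2 - 4 must be a square modulo 11^a. The map
  x \<mapsto> (2\<phi> - 1) x + 2 carries these x bijectively onto the multiples y of 11 for which -y is
  a square, and counting those by a recursion in steps of 121 gives
  264 |{F_n mod 11^a}| = 145 \<cdot> 11^a + O(1).\<close>

section \<open>Squares and quadratic equations modulo prime powers\<close>

lemma hensel_lift_quadratic:
  fixes p b c z0 :: int
  assumes p: "prime p" and j: "1 \<le> j" "j \<le> a"
    and root: "p ^ j dvd z0\<^sup>2 + b * z0 + c" and simple: "\<not> p dvd 2 * z0 + b"
  shows "\<exists>z. p ^ j dvd z - z0 \<and> p ^ a dvd z\<^sup>2 + b * z + c"
  using j(2)
proof (induction a rule: dec_induct)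
  case base
  show ?case using root by (intro exI[of _ z0]) auto
next
  case (step a)
  then obtain z where z: "p ^ j dvd z - z0" and "p ^ a dvd z\<^sup>2 + b * z + c"
    by blast
  then obtain k where k: "z\<^sup>2 + b * z + c = p ^ a * k"
    by (auto elim: dvdE)
  have "p dvd p ^ j"
    using j(1) by simp
  then have "p dvd z - z0"
    using z by (rule dvd_trans)
  then have "p dvd 2 * (z - z0)"
    by (rule dvd_mult)
  moreover have "2 * z0 + b = (2 * z + b) - 2 * (z - z0)"
    by simp
  ultimately have "\<not> p dvd 2 * z + b"
    using simple by (metis dvd_diff)
  then have "coprime (2 * z + b) p"
    using p by (simp add: prime_imp_coprime coprime_commute)
  then obtain e where "[(2 * z + b) * e = 1] (mod p)"
    using cong_solve_coprime_int by blast
  then have e: "p dvd 1 - (2 * z + b) * e"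
    by (simp add: cong_iff_dvd_diff dvd_diff_commute)
  \<comment> \<open>Newton step: correct z by a multiple of p^a\<close>
  define z' where "z' = z - k * e * p ^ a"
  have eq: "z'\<^sup>2 + b * z' + c = p ^ a * (k * (1 - (2 * z + b) * e)) + (k * e)\<^sup>2 * (p ^ a * p ^ a)"
    unfolding z'_def using k by (simp add: power2_eq_square algebra_simps)
  have "p ^ Suc a dvd p ^ (a + a)"
    using step.hyps j(1) by (intro le_imp_power_dvd) auto
  then have "p ^ Suc a dvd p ^ a * p ^ a"
    by (simp add: power_add)
  then have "p ^ Suc a dvd z'\<^sup>2 + b * z' + c"
    unfolding eq using e by (simp add: mult_dvd_mono)
  moreover have "p ^ j dvd z' - z0"
  proof -
    have "p ^ j dvd p ^ a"
      using step.hyps by (simp add: le_imp_power_dvd)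
    then have "p ^ j dvd (z - z0) - (k * e) * p ^ a"
      using z by (simp add: dvd_diff)
    moreover have "z' - z0 = (z - z0) - (k * e) * p ^ a"
      unfolding z'_def by (simp add: algebra_simps)
    ultimately show ?thesis by (simp only:)
  qed
  ultimately show ?case by blast
qed

lemma QuadRes_iff_dvd: "QuadRes m z \<longleftrightarrow> (\<exists>t. m dvd t\<^sup>2 - z)"
  by (simp add: QuadRes_def cong_iff_dvd_diff)

lemma QuadRes_cong:
  assumes "[z = z'] (mod m)"
  shows "QuadRes m z \<longleftrightarrow> QuadRes m z'"
  using assms unfolding QuadRes_def by (meson cong_sym cong_trans)

lemma QuadRes_dvd:
  assumes "QuadRes m z" "n dvd m"
  shows "QuadRes n z"
  using assms unfolding QuadRes_def by (meson cong_dvd_modulus)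

lemma QuadRes_prime_power_iff:
  fixes p z :: int
  assumes p: "prime p" "odd p" and b: "1 \<le> b" and z: "\<not> p dvd z"
  shows "QuadRes (p ^ b) z \<longleftrightarrow> QuadRes p z"
proof
  assume "QuadRes (p ^ b) z"
  then show "QuadRes p z"
    by (rule QuadRes_dvd) (use b in \<open>simp add: dvd_power\<close>)
next
  assume "QuadRes p z"
  then obtain t where t: "p ^ 1 dvd t\<^sup>2 + 0 * t + (- z)"
    by (auto simp: QuadRes_iff_dvd)
  have "\<not> p dvd t"
  proof
    assume "p dvd t"
    then have "p dvd t\<^sup>2 - (t\<^sup>2 + 0 * t + (- z))"
      using t by (intro dvd_diff) (auto simp: power2_eq_square)
    then show False using z by simp
  qed
  moreover have "\<not> p dvd 2"
    using p prime_ge_2_int[of p] zdvd_imp_le[of p 2] by (auto simp: le_less)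
  ultimately have "\<not> p dvd 2 * t + 0"
    using p(1) by (simp add: prime_dvd_mult_iff)
  from hensel_lift_quadratic[OF p(1) _ b t this] show "QuadRes (p ^ b) z"
    by (auto simp: QuadRes_iff_dvd)
qed

lemma QuadRes_mult_square_unit:
  fixes m q w y :: int
  assumes "coprime q m" "[q\<^sup>2 = w] (mod m)"
  shows "QuadRes m (y * w) \<longleftrightarrow> QuadRes m y"
proof
  assume "QuadRes m (y * w)"
  then obtain t where t: "[t\<^sup>2 = y * w] (mod m)"
    by (auto simp: QuadRes_def)
  obtain q' where q': "[q * q' = 1] (mod m)"
    using assms(1) cong_solve_coprime_int by blast
  have "[(t * q')\<^sup>2 = y * w * q'\<^sup>2] (mod m)"
    using t by (simp add: power_mult_distrib cong_mult)
  also have "[y * w * q'\<^sup>2 = y * (q * q')\<^sup>2] (mod m)"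
    using assms(2) by (simp add: power_mult_distrib cong_mult cong_sym mult.assoc)
  also have "[y * (q * q')\<^sup>2 = y * 1\<^sup>2] (mod m)"
    using q' by (intro cong_mult cong_pow) auto
  finally show "QuadRes m y"
    by (auto simp: QuadRes_def)
next
  assume "QuadRes m y"
  then obtain t where t: "[t\<^sup>2 = y] (mod m)"
    by (auto simp: QuadRes_def)
  then have "[(t * q)\<^sup>2 = y * w] (mod m)"
    using assms(2) by (simp add: power_mult_distrib cong_mult)
  then show "QuadRes m (y * w)"
    by (auto simp: QuadRes_def)
qed

lemma QuadRes_prime_power_dvd_imp_dvd_sq:
  fixes p z :: int
  assumes p: "prime p" and b: "2 \<le> b" and "p dvd z" "QuadRes (p ^ b) z"
  shows "p\<^sup>2 dvd z"
proof -
  obtain t where t: "p ^ b dvd t\<^sup>2 - z"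
    using assms(4) by (auto simp: QuadRes_iff_dvd)
  have "p\<^sup>2 dvd p ^ b"
    using b by (rule le_imp_power_dvd)
  with t have t2: "p\<^sup>2 dvd t\<^sup>2 - z"
    by (rule dvd_trans[rotated])
  then have "p dvd t\<^sup>2"
    using \<open>p dvd z\<close> dvd_add[of p "t\<^sup>2 - z" z] dvd_trans[of p "p\<^sup>2"] by simp
  then have "p\<^sup>2 dvd t\<^sup>2"
    using p by (simp add: prime_dvd_power_iff)
  then have "p\<^sup>2 dvd t\<^sup>2 - (t\<^sup>2 - z)"
    using t2 by (rule dvd_diff)
  then show ?thesis by simp
qed

lemma QuadRes_prime_power_mult_sq_iff:
  fixes p w :: int
  assumes p: "prime p" and b: "2 \<le> b"
  shows "QuadRes (p ^ b) (p\<^sup>2 * w) \<longleftrightarrow> QuadRes (p ^ (b - 2)) w"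
proof
  have pb: "p ^ b = p\<^sup>2 * p ^ (b - 2)"
    using b by (metis le_add_diff_inverse power_add)
  have p0: "p\<^sup>2 \<noteq> 0"
    using p by simp
  {
    assume "QuadRes (p ^ b) (p\<^sup>2 * w)"
    then obtain t where t: "p ^ b dvd t\<^sup>2 - p\<^sup>2 * w"
      by (auto simp: QuadRes_iff_dvd)
    have "p dvd p ^ b" "p dvd p\<^sup>2 * w"
      using b by (simp_all add: power2_eq_square)
    then have "p dvd (t\<^sup>2 - p\<^sup>2 * w) + p\<^sup>2 * w"
      using t by (intro dvd_add) (rule dvd_trans)
    then have "p dvd t"
      using p by (simp add: prime_dvd_power_iff)
    then obtain t' where "t = p * t'"
      by (auto elim: dvdE)
    then have "p\<^sup>2 * p ^ (b - 2) dvd p\<^sup>2 * (t'\<^sup>2 - w)"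
      using t pb by (simp add: power_mult_distrib right_diff_distrib)
    then show "QuadRes (p ^ (b - 2)) w"
      using p0 by (auto simp: QuadRes_iff_dvd)
  }
  {
    assume "QuadRes (p ^ (b - 2)) w"
    then obtain t where "p ^ (b - 2) dvd t\<^sup>2 - w"
      by (auto simp: QuadRes_iff_dvd)
    then have "p ^ b dvd (p * t)\<^sup>2 - p\<^sup>2 * w"
      unfolding pb by (simp add: power_mult_distrib right_diff_distrib[symmetric])
    then show "QuadRes (p ^ b) (p\<^sup>2 * w)"
      by (auto simp: QuadRes_iff_dvd)
  }
qed

lemma exists_half_mod:
  fixes m A :: int
  assumes "odd m"
  shows "\<exists>u. m dvd 2 * u - A"
proof -
  obtain q where q: "m = 2 * q + 1"
    using assms by (rule oddE)
  have "2 * (A * (q + 1)) - A = m * A"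
    by (simp add: q algebra_simps)
  then show ?thesis by (metis dvd_triv_left)
qed

lemma odd_dvd_four_mult_cancel:
  fixes m x :: int
  assumes "odd m" "m dvd 4 * x"
  shows "m dvd x"
proof -
  have "coprime m 4"
    using assms(1) coprime_power_right_iff[of m 2 2] by simp
  with assms(2) show ?thesis
    using coprime_dvd_mult_right_iff by blast
qed

lemma quadratic_root_mod:
  fixes m u B s e :: int
  assumes "odd m" and u: "m dvd 2 * u - (B + s)" and s: "m dvd s\<^sup>2 - (B\<^sup>2 + 4 * e)"
  shows "m dvd u\<^sup>2 - B * u - e"
proof -
  have "4 * (u\<^sup>2 - B * u - e) = (2 * u - (B + s)) * (2 * u - B + s) + (s\<^sup>2 - (B\<^sup>2 + 4 * e))"
    by (simp add: algebra_simps power2_eq_square)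
  also have "m dvd \<dots>"
    using u s by (intro dvd_add dvd_mult2)
  finally show ?thesis
    using assms(1) by (rule odd_dvd_four_mult_cancel[rotated])
qed

lemma quadratic_roots_product_mod:
  fixes m u v B s e :: int
  assumes "odd m" and u: "m dvd 2 * u - (B + s)" and v: "m dvd 2 * v - (B - s)"
    and s: "m dvd s\<^sup>2 - (B\<^sup>2 + 4 * e)"
  shows "m dvd u * v + e"
proof -
  have "4 * (u * v + e) = (2 * u - (B + s)) * (2 * v) + (B + s) * (2 * v - (B - s))
      - (s\<^sup>2 - (B\<^sup>2 + 4 * e))"
    by (simp add: algebra_simps power2_eq_square)
  also have "m dvd \<dots>"
    by (rule dvd_diff[OF dvd_add[OF dvd_mult2[OF u] dvd_mult[OF v]] s])
  finally show ?thesis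
    using assms(1) by (rule odd_dvd_four_mult_cancel[rotated])
qed

lemma mod_eq_iff_cong_int:
  fixes F x m :: nat
  assumes "x < m"
  shows "F mod m = x \<longleftrightarrow> [int F = int x] (mod int m)"
  unfolding cong_int_iff using assms by (simp add: cong_def)

lemma card_less_mult_mod_in:
  fixes m N :: nat
  assumes S: "S \<subseteq> {..<m}"
  shows "card {y. y < m * N \<and> y mod m \<in> S} = card S * N"
proof -
  define f where "f = (\<lambda>(i, q). i + m * q)"
  have "{y. y < m * N \<and> y mod m \<in> S} = f ` (S \<times> {..<N})"
  proof (intro equalityI subsetI)
    fix y assume y: "y \<in> {y. y < m * N \<and> y mod m \<in> S}"
    then have "y div m < N"
      by (simp add: less_mult_imp_div_less mult.commute)
    moreover have "y = f (y mod m, y div m)"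
      by (simp add: f_def)
    ultimately show "y \<in> f ` (S \<times> {..<N})"
      using y by blast
  next
    fix y assume "y \<in> f ` (S \<times> {..<N})"
    then obtain i q where "i \<in> S" "q < N" "y = i + m * q"
      by (auto simp: f_def)
    moreover have "i < m"
      using \<open>i \<in> S\<close> S by auto
    moreover have "m * (q + 1) \<le> m * N"
      using \<open>q < N\<close> by (intro mult_le_mono2) simp
    ultimately show "y \<in> {y. y < m * N \<and> y mod m \<in> S}"
      by auto
  qed
  moreover have "inj_on f (S \<times> {..<N})"
  proof (rule inj_onI, clarify)
    fix i q i' q'
    assume "i \<in> S" "i' \<in> S" and eq: "f (i, q) = f (i', q')"
    then have "i < m" "i' < m"
      using S by auto
    moreover from eq have iq: "i + m * q = i' + m * q'"
      by (simp add: f_def)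
    ultimately have "i = i'"
      by (metis mod_less mod_mult_self2)
    with iq \<open>i < m\<close> show "i = i' \<and> q = q'"
      by simp
  qed
  moreover have "finite S"
    using S finite_subset by blast
  ultimately show ?thesis
    by (simp add: card_image card_cartesian_product)
qed

lemma bij_betw_affine_mod:
  fixes r c :: int and m :: nat
  assumes m: "0 < m" and r: "coprime r (int m)"
  shows "bij_betw (\<lambda>x. nat ((r * int x + c) mod int m)) {..<m} {..<m}"
proof -
  define f where "f x = nat ((r * int x + c) mod int m)" for x
  have f: "int (f x) = (r * int x + c) mod int m" for x
    using m by (simp add: f_def)
  have "int (f x) < int m" for x
    using m by (simp add: f)
  then have "f x < m" for x
    by (simp only: of_nat_less_iff)
  then have "f ` {..<m} \<subseteq> {..<m}"
    by auto
  moreover have "inj_on f {..<m}"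
  proof (rule inj_onI)
    fix x y assume "x \<in> {..<m}" "y \<in> {..<m}" "f x = f y"
    then have "[r * int x + c = r * int y + c] (mod int m)"
      using f[of x] f[of y] by (simp add: cong_def)
    then have "[int x = int y] (mod int m)"
      using r by (simp add: cong_add_rcancel cong_mult_lcancel)
    then show "x = y"
      using \<open>x \<in> {..<m}\<close> \<open>y \<in> {..<m}\<close> by (simp add: cong_int_iff cong_def)
  qed
  ultimately show ?thesis
    unfolding f_def[symmetric] bij_betw_def using endo_inj_surj[of "{..<m}" f] by simp
qed

lemma card_Collect_bij_betw:
  assumes f: "bij_betw f A B" and PQ: "\<And>x. x \<in> A \<Longrightarrow> P x \<longleftrightarrow> Q (f x)"
  shows "card {x \<in> A. P x} = card {y \<in> B. Q y}"
proof -
  have "f ` {x \<in> A. P x} = {y \<in> B. Q y}"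
    using f PQ by (auto simp: bij_betw_def)
  moreover have "inj_on f {x \<in> A. P x}"
    using f by (auto simp: bij_betw_def intro: inj_on_subset)
  ultimately show ?thesis
    by (metis card_image)
qed

section \<open>The golden ratio modulo an integer\<close>

lemma fib_binet_cong:
  fixes \<phi> M :: int
  assumes "M dvd \<phi>\<^sup>2 - \<phi> - 1"
  shows "M dvd (2 * \<phi> - 1) * int (fib n) - (\<phi> ^ n - (1 - \<phi>) ^ n)"
proof (induction n rule: fib.induct)
  case (3 n)
  define E where "E k = (2 * \<phi> - 1) * int (fib k) - (\<phi> ^ k - (1 - \<phi>) ^ k)" for k
  have "E (Suc (Suc n)) = E (Suc n) + E n - (\<phi> ^ n - (1 - \<phi>) ^ n) * (\<phi>\<^sup>2 - \<phi> - 1)"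
    unfolding E_def by (simp add: algebra_simps power2_eq_square)
  moreover have "M dvd E (Suc n)" "M dvd E n"
    using 3 unfolding E_def by auto
  ultimately show ?case
    unfolding E_def[symmetric] using assms by simp
qed simp_all

text \<open>Since u \<equiv> \<phi>^i and \<phi> (1 - \<phi>) \<equiv> -1, Binet's formula gives
  u (2\<phi> - 1) F_i \<equiv> u (\<phi>^i - (1 - \<phi>)^i) \<equiv> u^2 - (-1)^i.\<close>

lemma fib_cong_of_golden_power:
  fixes \<phi> u x M :: int
  assumes \<phi>: "M dvd \<phi>\<^sup>2 - \<phi> - 1" and u: "[\<phi> ^ i = u] (mod M)"
    and root: "M dvd u\<^sup>2 - (2 * \<phi> - 1) * x * u - (-1) ^ i"
  shows "[u * ((2 * \<phi> - 1) * int (fib i)) = u * ((2 * \<phi> - 1) * x)] (mod M)"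
proof -
  define \<psi> where "\<psi> = 1 - \<phi>"
  have "M dvd \<phi> * \<psi> - (-1)"
    using \<phi> unfolding \<psi>_def by (simp add: algebra_simps power2_eq_square dvd_diff_commute)
  then have "[(\<phi> * \<psi>) ^ i = (-1) ^ i] (mod M)"
    by (intro cong_pow) (simp add: cong_iff_dvd_diff)
  then have \<phi>\<psi>: "[\<phi> ^ i * \<psi> ^ i = (-1) ^ i] (mod M)"
    by (simp add: power_mult_distrib)
  have "[u * ((2 * \<phi> - 1) * int (fib i)) = u * (\<phi> ^ i - \<psi> ^ i)] (mod M)"
    using fib_binet_cong[OF \<phi>, of i] unfolding \<psi>_def
    by (intro cong_mult cong_refl) (simp add: cong_iff_dvd_diff)
  also have "u * (\<phi> ^ i - \<psi> ^ i) = u * \<phi> ^ i - \<phi> ^ i * \<psi> ^ i + (\<phi> ^ i - u) * \<psi> ^ i"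
    by (simp add: algebra_simps)
  also have "[\<dots> = u * u - (-1) ^ i + (u - u) * \<psi> ^ i] (mod M)"
    using u \<phi>\<psi> by (intro cong_add cong_diff cong_mult cong_refl) (simp_all add: cong_sym)
  also have "u * u - (-1) ^ i + (u - u) * \<psi> ^ i = u\<^sup>2 - (-1) ^ i"
    by (simp add: power2_eq_square)
  also have "[\<dots> = (2 * \<phi> - 1) * x * u] (mod M)"
    using root by (simp add: cong_iff_dvd_diff algebra_simps)
  finally show ?thesis
    by (simp add: ac_simps)
qed

lemma golden_discriminant:
  fixes \<phi> s x e M :: int
  assumes "M dvd \<phi>\<^sup>2 - \<phi> - 1" "M dvd s\<^sup>2 - (5 * x\<^sup>2 + 4 * e)"
  shows "M dvd s\<^sup>2 - (((2 * \<phi> - 1) * x)\<^sup>2 + 4 * e)"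
proof -
  have "s\<^sup>2 - (((2 * \<phi> - 1) * x)\<^sup>2 + 4 * e) = (s\<^sup>2 - (5 * x\<^sup>2 + 4 * e)) - 4 * x\<^sup>2 * (\<phi>\<^sup>2 - \<phi> - 1)"
    by (simp add: algebra_simps power2_eq_square)
  also have "M dvd \<dots>"
    using dvd_diff[OF assms(2) dvd_mult[OF assms(1), of "4 * x\<^sup>2"]] .
  finally show ?thesis .
qed

lemma QuadRes_five_sq_minus_four_shift:
  fixes M r x y :: int
  assumes r: "M dvd r\<^sup>2 - 5" and y: "[y = r * x + 2] (mod M)"
  shows "QuadRes M (5 * x\<^sup>2 - 4) \<longleftrightarrow> QuadRes M (y * (y - 4))"
proof (rule QuadRes_cong)
  have "M dvd y - (r * x + 2)"
    using y by (simp add: cong_iff_dvd_diff)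
  then have "M dvd (y - (r * x + 2)) * (y + (r * x + 2) - 4) + (r\<^sup>2 - 5) * x\<^sup>2"
    using r by (intro dvd_add dvd_mult2)
  also have "(y - (r * x + 2)) * (y + (r * x + 2) - 4) + (r\<^sup>2 - 5) * x\<^sup>2 = y * (y - 4) - (5 * x\<^sup>2 - 4)"
    by (simp add: algebra_simps power2_eq_square)
  finally show "[5 * x\<^sup>2 - 4 = y * (y - 4)] (mod M)"
    by (simp add: cong_iff_dvd_diff dvd_diff_commute)
qed

lemma lucas_square:
  "(2 * int (fib (Suc n)) - int (fib n))\<^sup>2 = 5 * (int (fib n))\<^sup>2 + 4 * (-1) ^ n"
proof -
  have "int (fib (Suc (Suc n)) * fib n) - int ((fib (Suc n))\<^sup>2) = - ((-1) ^ n)"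
    by (rule fib_Cassini_int)
  then show ?thesis
    by (simp add: algebra_simps power2_eq_square)
qed

section \<open>Arithmetic modulo 11\<close>

lemma prime_11_nat: "prime (11::nat)"
  by (simp add: prime_nat_iff' atLeastLessThan_nat_numeral)

lemma prime_11: "prime (11::int)"
  using prime_11_nat by (simp add: prime_int_nat_transfer)

lemma coprime_11_power:
  fixes z :: int
  assumes "\<not> 11 dvd z"
  shows "coprime z (11 ^ a)"
  using prime_imp_coprime[OF prime_11 assms] by (simp add: coprime_commute)

lemma mod_11_cases:
  fixes z :: int
  obtains "z mod 11 = 0" | "z mod 11 = 1" | "z mod 11 = 2" | "z mod 11 = 3" | "z mod 11 = 4"
    | "z mod 11 = 5" | "z mod 11 = 6" | "z mod 11 = 7" | "z mod 11 = 8" | "z mod 11 = 9"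
    | "z mod 11 = 10"
proof -
  have "0 \<le> z mod 11" "z mod 11 < 11"
    by simp_all
  then show ?thesis
    using that by (smt (verit))
qed

lemma QuadRes_11_iff: "QuadRes 11 z \<longleftrightarrow> z mod 11 \<in> {0, 1, 3, 4, 5, 9}"
proof -
  have "QuadRes 11 z \<longleftrightarrow> QuadRes 11 (z mod 11)"
    by (rule QuadRes_cong) (simp add: cong_def)
  also have "\<dots> \<longleftrightarrow> (\<exists>t. t\<^sup>2 mod 11 = z mod 11)"
    by (simp add: QuadRes_def cong_def)
  also have "\<dots> \<longleftrightarrow> (\<exists>t. (t mod 11)\<^sup>2 mod 11 = z mod 11)"
    by (simp add: power_mod)
  also have "\<dots> \<longleftrightarrow> z mod 11 \<in> {0, 1, 3, 4, 5, 9}"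
  proof
    assume "\<exists>t. (t mod 11)\<^sup>2 mod 11 = z mod 11"
    then obtain t where "(t mod 11)\<^sup>2 mod 11 = z mod 11" ..
    then show "z mod 11 \<in> {0, 1, 3, 4, 5, 9}"
      by (cases t rule: mod_11_cases) auto
  next
    assume "z mod 11 \<in> {0, 1, 3, 4, 5, 9}"
    then show "\<exists>t. (t mod 11)\<^sup>2 mod 11 = z mod 11"
      by (auto intro: exI[of _ 0] exI[of _ 1] exI[of _ 2] exI[of _ 3] exI[of _ 4] exI[of _ 5])
  qed
  finally show ?thesis .
qed

lemma QuadRes_11_power_iff:
  fixes z :: int
  assumes "1 \<le> b" "\<not> 11 dvd z"
  shows "QuadRes (11 ^ b) z \<longleftrightarrow> z mod 11 \<in> {1, 3, 4, 5, 9}"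
  using QuadRes_prime_power_iff[OF prime_11 _ assms] assms(2)
  by (auto simp: QuadRes_11_iff dvd_eq_mod_eq_0)

lemma QuadRes_11_power_neg_iff:
  fixes y :: nat
  assumes "1 \<le> b" "\<not> 11 dvd y"
  shows "QuadRes (11 ^ b) (- int y) \<longleftrightarrow> y mod 11 \<in> {2, 6, 7, 8, 10}"
proof -
  have y: "int y mod 11 = int (y mod 11)" "y mod 11 \<noteq> 0"
    using assms(2) by (simp_all add: of_nat_mod dvd_eq_mod_eq_0)
  have "\<not> 11 dvd - int y"
    using assms(2) by (metis dvd_minus_iff of_nat_dvd_iff of_nat_numeral)
  then have "QuadRes (11 ^ b) (- int y) \<longleftrightarrow> (- int y) mod 11 \<in> {1, 3, 4, 5, 9}"
    by (rule QuadRes_11_power_iff[OF assms(1)])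
  also have "(- int y) mod 11 = 11 - int (y mod 11)"
    using y by (simp add: zmod_zminus1_eq_if)
  also have "11 - int (y mod 11) \<in> {1, 3, 4, 5, 9} \<longleftrightarrow> y mod 11 \<in> {2, 6, 7, 8, 10}"
    by auto
  finally show ?thesis .
qed

lemma QuadRes_11_power_mult_four_minus:
  fixes y :: int
  assumes a: "1 \<le> a" and y: "11 dvd y"
  shows "QuadRes (11 ^ a) (y * (y - 4)) \<longleftrightarrow> QuadRes (11 ^ a) (- y)"
proof -
  have w: "(4 - y) mod 11 = 4"
    using y by (simp add: mod_diff_right_eq[symmetric] dvd_eq_mod_eq_0)
  then have "QuadRes (11 ^ a) (4 - y)"
    using QuadRes_11_power_iff[OF a, of "4 - y"] by (simp add: dvd_eq_mod_eq_0)
  then obtain q where q: "[q\<^sup>2 = 4 - y] (mod 11 ^ a)"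
    by (auto simp: QuadRes_def)
  have "\<not> 11 dvd q"
  proof
    assume "11 dvd q"
    then have "q\<^sup>2 mod 11 = 0"
      by (simp add: power2_eq_square dvd_eq_mod_eq_0[symmetric])
    moreover have "[q\<^sup>2 = 4 - y] (mod 11)"
      using q by (rule cong_dvd_modulus) (use a in simp)
    ultimately show False
      using w by (simp add: cong_def)
  qed
  then have "coprime q (11 ^ a)"
    by (rule coprime_11_power)
  from QuadRes_mult_square_unit[OF this q, of "- y"] show ?thesis
    by (simp add: algebra_simps)
qed

text \<open>z^5 mod 11 is the quadratic character modulo 11 (Euler's criterion).\<close>

lemma pow5_mod_11:
  fixes z :: int
  shows "z ^ 5 mod 11 = (if z mod 11 = 0 then 0 else if z mod 11 \<in> {1, 3, 4, 5, 9} then 1 else 10)"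
proof -
  have "z ^ 5 mod 11 = (z mod 11) ^ 5 mod 11"
    by (simp add: power_mod)
  then show ?thesis
    by (cases z rule: mod_11_cases) auto
qed

lemma pow5_mod_11_mult_eq_minus_one:
  fixes u v :: int
  assumes "[u * v = -1] (mod 11)"
  shows "u ^ 5 mod 11 = 1 \<or> v ^ 5 mod 11 = 1"
proof -
  have "[(u * v) ^ 5 = (-1) ^ 5] (mod 11)"
    using assms by (rule cong_pow)
  then have "u ^ 5 * v ^ 5 mod 11 = 10"
    by (simp add: cong_def power_mult_distrib)
  then have prod: "(u ^ 5 mod 11) * (v ^ 5 mod 11) mod 11 = 10"
    by (simp only: mod_mult_eq)
  have "u ^ 5 mod 11 \<in> {0, 1, 10}" "v ^ 5 mod 11 \<in> {0, 1, 10}"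
    by (simp_all only: pow5_mod_11 split: if_split) simp_all
  then show ?thesis
    using prod by auto
qed

lemma five_sq_plus_const_mod_11:
  fixes x c :: int
  shows "(5 * x\<^sup>2 + c) mod 11 = (5 * (x mod 11)\<^sup>2 + c) mod 11"
proof -
  have "[5 * x\<^sup>2 + c = 5 * (x mod 11)\<^sup>2 + c] (mod 11)"
    by (intro cong_add cong_mult cong_pow cong_refl) (simp add: cong_def)
  then show ?thesis
    by (simp add: cong_def)
qed

lemma fib_mod_11: "fib n mod 11 \<in> {0, 1, 2, 3, 5, 8, 10}"
proof -
  define P :: "(nat \<times> nat) set"
    where "P = {(0, 1), (1, 1), (1, 2), (2, 3), (3, 5), (5, 8), (8, 2), (2, 10), (10, 1), (1, 0)}"
  have step: "(y, (x + y) mod 11) \<in> P" if "(x, y) \<in> P" for x y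
    using that unfolding P_def
    by (simp only: insert_iff empty_iff prod.inject) (elim disjE conjE; simp)
  have "(fib n mod 11, fib (Suc n) mod 11) \<in> P"
  proof (induction n)
    case (Suc n)
    have "fib (Suc (Suc n)) mod 11 = (fib n mod 11 + fib (Suc n) mod 11) mod 11"
      by (simp add: mod_add_eq add.commute)
    then show ?case
      using step[OF Suc] by simp
  qed (simp add: P_def)
  then show ?thesis
    unfolding P_def by blast
qed

lemma fib_mod_11_eq_5_imp_square:
  assumes "int (fib n) mod 11 = 5"
  shows "\<exists>t. t\<^sup>2 = 5 * (int (fib n))\<^sup>2 - 4"
proof (cases "even n")
  case True
  \<comment> \<open>then the Lucas number would be a square root of 5 \<cdot> 5^2 + 4 \<equiv> 8, a non-residue\<close>
  define L where "L = 2 * int (fib (Suc n)) - int (fib n)"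
  have "L\<^sup>2 = 5 * (int (fib n))\<^sup>2 + 4"
    using lucas_square[of n] True by (simp add: L_def)
  then have "(L mod 11)\<^sup>2 mod 11 = 8"
    using assms five_sq_plus_const_mod_11[of "int (fib n)" 4] by (simp add: power_mod)
  then show ?thesis
    by (cases L rule: mod_11_cases) auto
next
  case False
  then show ?thesis
    using lucas_square[of n] by (intro exI[of _ "2 * int (fib (Suc n)) - int (fib n)"]) simp
qed

section \<open>Fibonacci residues modulo powers of 11\<close>

lemma golden_root_mod_11_power:
  assumes "2 \<le> a"
  shows "\<exists>\<phi>::int. [\<phi> = 85] (mod 121) \<and> 11 ^ a dvd \<phi>\<^sup>2 - \<phi> - 1"
proof -
  have "11 ^ 2 dvd (85::int)\<^sup>2 + (-1) * 85 + (-1)" "\<not> (11::int) dvd 2 * 85 + (-1)"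
    by simp_all
  from hensel_lift_quadratic[OF prime_11 _ assms this] show ?thesis
    by (auto simp: cong_iff_dvd_diff)
qed

lemma golden_root_mod_11:
  fixes \<phi> :: int
  assumes "[\<phi> = 85] (mod 121)"
  shows "\<phi> mod 11 = 8"
proof -
  have "[\<phi> = 85] (mod 11)"
    using assms by (rule cong_dvd_modulus) simp
  then show ?thesis
    by (simp add: cong_def)
qed

lemma residue_primroot_11_8: "residue_primroot 11 (8::nat)"
proof -
  have d10: "ord 11 (8::nat) dvd 10"
    unfolding ord_divides'[symmetric] by (simp add: cong_def)
  have small: "\<not> ord 11 (8::nat) dvd 1" "\<not> ord 11 (8::nat) dvd 2" "\<not> ord 11 (8::nat) dvd 5"
    unfolding ord_divides'[symmetric] by (simp_all add: cong_def)
  have "ord 11 (8::nat) \<noteq> 0"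
    using prime_imp_coprime[OF prime_11_nat, of 8] by (simp add: ord_eq_0)
  moreover have "ord 11 (8::nat) \<le> 10"
    using d10 by (rule dvd_imp_le) simp
  ultimately have "ord 11 (8::nat) \<in> {1, 2, 3, 4, 5, 6, 7, 8, 9, 10}"
    by (simp only: insert_iff empty_iff) presburger
  then have "ord 11 (8::nat) = 10"
    using d10 small by auto
  then show ?thesis
    using prime_11_nat prime_imp_coprime[OF prime_11_nat, of 8]
    by (simp add: residue_primroot_def totient_prime)
qed

text \<open>The root \<phi> \<equiv> 85 (mod 121) is a primitive root modulo 11 that does not satisfy
  \<phi>^10 \<equiv> 1 (mod 121), hence a primitive root modulo every power of 11.\<close>

lemma golden_root_residue_primroot:
  fixes \<phi> :: int
  assumes a: "2 \<le> a" and \<phi>: "[\<phi> = 85] (mod 121)"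
  shows "residue_primroot (11 ^ a) (nat (\<phi> mod 11 ^ a))"
proof -
  define g where "g = nat (\<phi> mod 11 ^ a)"
  have "(121::int) dvd 11 ^ a"
    using a le_imp_power_dvd[of 2 a "11::int"] by simp
  then have "[int g = \<phi>] (mod 121)"
    by (simp add: g_def cong_def mod_mod_cancel)
  then have "[int g = 85] (mod 121)"
    using \<phi> by (rule cong_trans)
  then have "[g = 85] (mod 121)"
    by (metis cong_int_iff of_nat_numeral)
  then have g121: "g mod 121 = 85"
    by (simp add: cong_def)
  have "g mod 11 = g mod 121 mod 11"
    by (simp add: mod_mod_cancel)
  then have "[g = 8] (mod 11)"
    using g121 by (simp add: cong_def)
  then have "residue_primroot 11 g"
    using residue_primroot_11_8 residue_primroot_cong by blast
  moreover have "[g ^ (11 - 1) \<noteq> 1] (mod 11\<^sup>2)"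
  proof -
    have "g ^ 10 mod 121 = (g mod 121) ^ 10 mod 121"
      by (simp add: power_mod)
    then show ?thesis
      using g121 by (simp add: cong_def)
  qed
  ultimately have "\<forall>k>0. residue_primroot (11 ^ k) g"
    using residue_primroot_prime_lift_iff[of 11] prime_11 by (simp add: prime_int_nat_transfer)
  then show ?thesis
    using a by (simp add: g_def)
qed

lemma golden_root_powers_cover_units:
  fixes \<phi> u :: int
  assumes a: "2 \<le> a" and \<phi>: "[\<phi> = 85] (mod 121)" and u: "\<not> 11 dvd u"
  shows "\<exists>i. [\<phi> ^ i = u] (mod 11 ^ a)"
proof -
  define g where "g = nat (\<phi> mod 11 ^ a)"
  define k where "k = nat (u mod 11 ^ a)"
  have ki: "int k = u mod 11 ^ a"
    by (simp add: k_def)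
  have "coprime (u mod 11 ^ a) (11 ^ a)"
    using coprime_11_power[OF u]
    by (metis coprime_mod_left_iff power_not_zero zero_neq_numeral)
  then have "coprime (int k) (int (11 ^ a))"
    by (simp only: ki of_nat_power of_nat_numeral)
  then have "coprime k (11 ^ a)"
    by (metis coprime_int_iff)
  moreover have "k \<noteq> 0"
  proof
    assume "k = 0"
    with \<open>coprime k (11 ^ a)\<close> a show False
      by simp
  qed
  moreover have "int k < int (11 ^ a)"
    by (simp add: ki)
  ultimately have k: "k \<in> totatives (11 ^ a)"
    by (simp add: in_totatives_iff)
  have "(1::nat) < 11 ^ a"
    using a by (intro one_less_power) auto
  then have "bij_betw (\<lambda>i. g ^ i mod 11 ^ a) {..<totient (11 ^ a)} (totatives (11 ^ a))"
    unfolding g_def using golden_root_residue_primroot[OF a \<phi>] by (rule residue_primroot_is_generator)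
  then obtain i where "k = g ^ i mod 11 ^ a"
    using k by (auto simp: bij_betw_def)
  then have "u mod 11 ^ a = int g ^ i mod 11 ^ a"
    unfolding ki[symmetric] by (simp add: of_nat_mod)
  also have "\<dots> = \<phi> ^ i mod 11 ^ a"
    by (simp add: g_def power_mod)
  finally have "[\<phi> ^ i = u] (mod 11 ^ a)"
    unfolding cong_def by (rule sym)
  then show ?thesis ..
qed

lemma fib_hits_golden_quadratic_root:
  fixes \<phi> x u e :: int
  assumes a: "2 \<le> a" and \<phi>85: "[\<phi> = 85] (mod 121)" and \<phi>: "11 ^ a dvd \<phi>\<^sup>2 - \<phi> - 1"
    and e: "e = 1 \<or> e = -1" and char: "u ^ 5 mod 11 = e mod 11"
    and root: "11 ^ a dvd u\<^sup>2 - (2 * \<phi> - 1) * x * u - e"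
  shows "\<exists>n. [int (fib n) = x] (mod 11 ^ a)"
proof -
  have \<phi>11: "\<phi> mod 11 = 8"
    using \<phi>85 by (rule golden_root_mod_11)
  have "\<not> 11 dvd u"
    using char e pow5_mod_11[of u] by (auto simp: dvd_eq_mod_eq_0)
  then obtain i where i: "[\<phi> ^ i = u] (mod 11 ^ a)"
    using golden_root_powers_cover_units[OF a \<phi>85] by blast
  \<comment> \<open>\<phi> \<equiv> 8 is a non-residue mod 11, so the character of u = \<phi>^i is (-1)^i\<close>
  have "[u ^ 5 = (\<phi> ^ 5) ^ i] (mod 11)"
  proof -
    have "[\<phi> ^ i = u] (mod 11)"
      using i by (rule cong_dvd_modulus) (use a in simp)
    then show ?thesis
      by (metis cong_pow cong_sym power_mult mult.commute)
  qed
  also have "[(\<phi> ^ 5) ^ i = (-1) ^ i] (mod 11)"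
  proof (rule cong_pow)
    have "\<phi> ^ 5 mod 11 = 10"
      using \<phi>11 pow5_mod_11[of \<phi>] by simp
    then show "[\<phi> ^ 5 = -1] (mod 11)"
      by (simp add: cong_def)
  qed
  finally have "[u ^ 5 = (-1) ^ i] (mod 11)" .
  then have sign: "(-1) ^ i = e"
    using char e by (cases "even i") (auto simp: cong_def)
  have "[u * ((2 * \<phi> - 1) * int (fib i)) = u * ((2 * \<phi> - 1) * x)] (mod 11 ^ a)"
    using fib_cong_of_golden_power[OF \<phi> i] root sign by simp
  moreover have "(2 * \<phi> - 1) mod 11 = 4"
    using \<phi>11 by (simp add: mod_diff_left_eq[symmetric] mod_mult_right_eq[symmetric])
  then have "coprime (2 * \<phi> - 1) (11 ^ a)"
    by (intro coprime_11_power) (auto simp: dvd_eq_mod_eq_0)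
  ultimately have "[int (fib i) = x] (mod 11 ^ a)"
    using coprime_11_power[OF \<open>\<not> 11 dvd u\<close>] by (simp add: cong_mult_lcancel)
  then show ?thesis ..
qed

lemma fib_hits_residue_plus:
  fixes x :: int
  assumes a: "2 \<le> a" and x: "x mod 11 \<in> {0, 1, 3, 8, 10}"
  shows "\<exists>n. [int (fib n) = x] (mod 11 ^ a)"
proof -
  obtain \<phi> :: int where \<phi>85: "[\<phi> = 85] (mod 121)" and \<phi>: "11 ^ a dvd \<phi>\<^sup>2 - \<phi> - 1"
    using golden_root_mod_11_power[OF a] by blast
  define B where "B = (2 * \<phi> - 1) * x"
  have "(5 * x\<^sup>2 + 4) mod 11 \<in> {1, 3, 4, 5, 9}"
    using x five_sq_plus_const_mod_11[of x 4] by auto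
  then have "QuadRes (11 ^ a) (5 * x\<^sup>2 + 4 * 1)"
    using a QuadRes_11_power_iff[of a "5 * x\<^sup>2 + 4"] by (auto simp: dvd_eq_mod_eq_0)
  then obtain s where "11 ^ a dvd s\<^sup>2 - (5 * x\<^sup>2 + 4 * 1)"
    by (auto simp: QuadRes_iff_dvd)
  then have s: "11 ^ a dvd s\<^sup>2 - (B\<^sup>2 + 4 * 1)"
    unfolding B_def by (rule golden_discriminant[OF \<phi>])
  then have s': "11 ^ a dvd (- s)\<^sup>2 - (B\<^sup>2 + 4 * 1)"
    by simp
  have odd: "odd ((11::int) ^ a)"
    by simp
  obtain u v where u: "11 ^ a dvd 2 * u - (B + s)" and v: "11 ^ a dvd 2 * v - (B + - s)"
    using exists_half_mod[OF odd] by meson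
  have "11 ^ a dvd u * v + 1"
    using quadratic_roots_product_mod[OF odd u _ s] v by simp
  moreover have "(11::int) dvd 11 ^ a"
    using a by simp
  ultimately have "11 dvd u * v + 1"
    by (rule dvd_trans[rotated])
  then have "[u * v = -1] (mod 11)"
    by (simp add: cong_iff_dvd_diff)
  \<comment> \<open>-1 is a non-residue mod 11, so exactly one of the two roots is a residue\<close>
  then consider "u ^ 5 mod 11 = 1 mod 11" | "v ^ 5 mod 11 = 1 mod 11"
    using pow5_mod_11_mult_eq_minus_one[of u v] by auto
  then show ?thesis
  proof cases
    case 1
    moreover have "11 ^ a dvd u\<^sup>2 - (2 * \<phi> - 1) * x * u - 1"
      using quadratic_root_mod[OF odd u s] by (simp add: B_def)
    ultimately show ?thesis
      by (rule fib_hits_golden_quadratic_root[OF a \<phi>85 \<phi>, rotated]) simp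
  next
    case 2
    moreover have "11 ^ a dvd v\<^sup>2 - (2 * \<phi> - 1) * x * v - 1"
      using quadratic_root_mod[OF odd v s'] by (simp add: B_def)
    ultimately show ?thesis
      by (rule fib_hits_golden_quadratic_root[OF a \<phi>85 \<phi>, rotated]) simp
  qed
qed

lemma fib_hits_residue_minus:
  fixes x :: int
  assumes a: "2 \<le> a" and x: "x mod 11 \<in> {2, 5}" and sq: "QuadRes (11 ^ a) (5 * x\<^sup>2 - 4)"
  shows "\<exists>n. [int (fib n) = x] (mod 11 ^ a)"
proof -
  obtain \<phi> :: int where \<phi>85: "[\<phi> = 85] (mod 121)" and \<phi>: "11 ^ a dvd \<phi>\<^sup>2 - \<phi> - 1"
    using golden_root_mod_11_power[OF a] by blast
  define B where "B = (2 * \<phi> - 1) * x"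
  obtain s where s0: "11 ^ a dvd s\<^sup>2 - (5 * x\<^sup>2 + 4 * (-1))"
    using sq by (auto simp: QuadRes_iff_dvd)
  then have s: "11 ^ a dvd s\<^sup>2 - (B\<^sup>2 + 4 * (-1))"
    unfolding B_def by (rule golden_discriminant[OF \<phi>])
  have odd: "odd ((11::int) ^ a)"
    by simp
  obtain u where u: "11 ^ a dvd 2 * u - (B + s)"
    using exists_half_mod[OF odd] by blast
  have root: "11 ^ a dvd u\<^sup>2 - (2 * \<phi> - 1) * x * u - (-1)"
    using quadratic_root_mod[OF odd u s] by (simp add: B_def)
  have 11: "(11::int) dvd 11 ^ a"
    using a by simp
  \<comment> \<open>modulo 11, 2 u = (2\<phi> - 1) x + s with 2\<phi> - 1 \<equiv> 4 and 2 \<cdot> 6 \<equiv> 1\<close>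
  have u11: "[u = 6 * (4 * x + s)] (mod 11)"
  proof -
    have "11 dvd \<phi> - 8"
      using golden_root_mod_11[OF \<phi>85] by (simp add: mod_eq_dvd_iff[symmetric])
    moreover have "B - 4 * x = (2 * x) * (\<phi> - 8) + 11 * x"
      unfolding B_def by (simp add: algebra_simps)
    ultimately have B: "11 dvd B - 4 * x"
      by simp
    have "u - 6 * (4 * x + s) = 6 * (2 * u - (B + s)) + 6 * (B - 4 * x) - 11 * u"
      by (simp add: algebra_simps)
    also have "11 dvd \<dots>"
      by (rule dvd_diff[OF dvd_add[OF dvd_mult[OF dvd_trans[OF 11 u]] dvd_mult[OF B]] dvd_triv_left])
    finally show ?thesis
      by (simp add: cong_iff_dvd_diff)
  qed
  have "[6 * (4 * x + s) = 6 * (4 * (x mod 11) + s mod 11)] (mod 11)"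
    by (intro cong_add cong_mult cong_refl) (simp_all add: cong_def)
  with u11 have "[u ^ 5 = (6 * (4 * (x mod 11) + s mod 11)) ^ 5] (mod 11)"
    by (intro cong_pow) (rule cong_trans)
  then have u5: "u ^ 5 mod 11 = (6 * (4 * (x mod 11) + s mod 11)) ^ 5 mod 11"
    by (simp add: cong_def)
  have "11 dvd s\<^sup>2 - (5 * x\<^sup>2 - 4)"
    using 11 s0 by (simp add: dvd_trans)
  then have "s\<^sup>2 mod 11 = (5 * x\<^sup>2 - 4) mod 11"
    by (simp add: mod_eq_dvd_iff)
  then have s5: "(s mod 11)\<^sup>2 mod 11 = (5 * (x mod 11)\<^sup>2 - 4) mod 11"
    using five_sq_plus_const_mod_11[of x "-4"] by (simp add: power_mod)
  have "u ^ 5 mod 11 = -1 mod 11"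
    using x u5 s5 by (cases s rule: mod_11_cases) auto
  from fib_hits_golden_quadratic_root[OF a \<phi>85 \<phi> _ this root] show ?thesis
    by simp
qed

lemma fib_residue_classes:
  fixes x :: nat
  assumes a: "2 \<le> a" and n: "[int (fib n) = int x] (mod 11 ^ a)"
  shows "x mod 11 \<in> {0, 1, 2, 3, 8, 10} \<or> (x mod 11 = 5 \<and> QuadRes (11 ^ a) (5 * (int x)\<^sup>2 - 4))"
proof -
  have "[int (fib n) = int x] (mod 11)"
    using n by (rule cong_dvd_modulus) (use a in simp)
  then have "[fib n = x] (mod 11)"
    by (simp only: cong_int_iff[symmetric] of_nat_numeral)
  then have n11: "fib n mod 11 = x mod 11"
    by (simp add: cong_def)
  moreover have "QuadRes (11 ^ a) (5 * (int x)\<^sup>2 - 4)" if "x mod 11 = 5"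
  proof -
    have "int (fib n) mod 11 = int (fib n mod 11)"
      by (simp add: of_nat_mod)
    also have "\<dots> = 5"
      using n11 that by simp
    finally obtain t where "t\<^sup>2 = 5 * (int (fib n))\<^sup>2 - 4"
      using fib_mod_11_eq_5_imp_square by blast
    moreover have "[5 * (int (fib n))\<^sup>2 - 4 = 5 * (int x)\<^sup>2 - 4] (mod 11 ^ a)"
      using n by (intro cong_diff cong_mult cong_pow cong_refl)
    ultimately show ?thesis
      unfolding QuadRes_def by (metis (no_types))
  qed
  ultimately show ?thesis
    using fib_mod_11[of n] by auto
qed

lemma fib_hits_residue:
  fixes x :: nat
  assumes a: "2 \<le> a"
    and x: "x mod 11 \<in> {0, 1, 2, 3, 8, 10} \<or> (x mod 11 = 5 \<and> QuadRes (11 ^ a) (5 * (int x)\<^sup>2 - 4))"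
  shows "\<exists>n. [int (fib n) = int x] (mod 11 ^ a)"
proof -
  have x11: "int x mod 11 = int (x mod 11)"
    by (simp add: of_nat_mod)
  show ?thesis
  proof (cases "x mod 11 \<in> {0, 1, 3, 8, 10}")
    case True
    then show ?thesis
      using fib_hits_residue_plus[OF a] x11 by auto
  next
    case False
    then have x25: "int x mod 11 \<in> {2, 5}"
      using x x11 by auto
    moreover have "QuadRes (11 ^ a) (5 * (int x)\<^sup>2 - 4)"
    proof (cases "x mod 11 = 5")
      case False
      then have "(5 * (int x)\<^sup>2 + -4) mod 11 = 5"
        using x25 five_sq_plus_const_mod_11[of "int x" "-4"] x11 by auto
      then show ?thesis
        using a QuadRes_11_power_iff[of a "5 * (int x)\<^sup>2 - 4"] by (auto simp: dvd_eq_mod_eq_0)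
    qed (use x in auto)
    ultimately show ?thesis
      by (rule fib_hits_residue_minus[OF a])
  qed
qed

lemma fib_residue_iff:
  fixes x :: nat
  assumes a: "2 \<le> a" and x: "x < 11 ^ a"
  shows "(\<exists>n. fib n mod 11 ^ a = x) \<longleftrightarrow>
    x mod 11 \<in> {0, 1, 2, 3, 8, 10} \<or> (x mod 11 = 5 \<and> QuadRes (11 ^ a) (5 * (int x)\<^sup>2 - 4))"
proof -
  have iff: "fib n mod 11 ^ a = x \<longleftrightarrow> [int (fib n) = int x] (mod 11 ^ a)" for n
    using mod_eq_iff_cong_int[OF x] by simp
  show ?thesis
  proof
    assume "\<exists>n. fib n mod 11 ^ a = x"
    then obtain n where "[int (fib n) = int x] (mod 11 ^ a)"
      using iff by blast
    then show "x mod 11 \<in> {0, 1, 2, 3, 8, 10} \<or>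
        (x mod 11 = 5 \<and> QuadRes (11 ^ a) (5 * (int x)\<^sup>2 - 4))"
      by (rule fib_residue_classes[OF a])
  next
    assume "x mod 11 \<in> {0, 1, 2, 3, 8, 10} \<or>
        (x mod 11 = 5 \<and> QuadRes (11 ^ a) (5 * (int x)\<^sup>2 - 4))"
    then obtain n where "[int (fib n) = int x] (mod 11 ^ a)"
      using fib_hits_residue[OF a] by meson
    then show "\<exists>n. fib n mod 11 ^ a = x"
      using iff by blast
  qed
qed

section \<open>Counting Fibonacci residues\<close>

definition neg_squares :: "nat \<Rightarrow> nat set" where
  "neg_squares b = {y. y < 11 ^ b \<and> QuadRes (11 ^ b) (- int y)}"

lemma card_neg_squares_split:
  assumes b: "1 \<le> b"
  shows "card (neg_squares b) = 5 * 11 ^ (b - 1) + card {y \<in> neg_squares b. 11 dvd y}"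
proof -
  define U where "U = {y::nat. y < 11 * 11 ^ (b - 1) \<and> y mod 11 \<in> {2, 6, 7, 8, 10}}"
  have pow: "(11::nat) ^ b = 11 * 11 ^ (b - 1)"
    using b by (cases b) simp_all
  have "neg_squares b = U \<union> {y \<in> neg_squares b. 11 dvd y}"
    using QuadRes_11_power_neg_iff[OF b] unfolding U_def neg_squares_def pow
    by (auto simp: dvd_eq_mod_eq_0)
  moreover have "U \<inter> {y \<in> neg_squares b. 11 dvd y} = {}"
    by (auto simp: U_def dvd_eq_mod_eq_0)
  moreover have "card U = 5 * 11 ^ (b - 1)"
    unfolding U_def by (subst card_less_mult_mod_in) auto
  moreover have "finite U" "finite {y \<in> neg_squares b. 11 dvd y}"
    by (auto simp: U_def neg_squares_def)
  ultimately show ?thesis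
    by (metis card_Un_disjoint)
qed

lemma neg_squares_multiples_11:
  assumes b: "2 \<le> b"
  shows "{y \<in> neg_squares b. 11 dvd y} = (\<lambda>z. 121 * z) ` neg_squares (b - 2)"
proof -
  have "(11::nat) ^ b = 11\<^sup>2 * 11 ^ (b - 2)"
    using b by (metis le_add_diff_inverse power_add)
  then have pow: "(11::nat) ^ b = 121 * 11 ^ (b - 2)"
    by simp
  have sq: "QuadRes (11 ^ b) (- int (121 * z)) \<longleftrightarrow> QuadRes (11 ^ (b - 2)) (- int z)" for z
    using QuadRes_prime_power_mult_sq_iff[OF prime_11 b, of "- int z"] by simp
  show ?thesis
  proof (intro equalityI subsetI)
    fix y assume "y \<in> {y \<in> neg_squares b. 11 dvd y}"
    then have y: "y < 11 ^ b" "QuadRes (11 ^ b) (- int y)" "11 dvd y"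
      by (auto simp: neg_squares_def)
    have "(11::int) dvd - int y"
      using y(3) by (metis dvd_minus_iff of_nat_dvd_iff of_nat_numeral)
    then have "11\<^sup>2 dvd - int y"
      using QuadRes_prime_power_dvd_imp_dvd_sq[OF prime_11 b _ y(2)] by blast
    then have "(121::int) dvd int y"
      by simp
    then have "121 dvd y"
      by (metis of_nat_dvd_iff of_nat_numeral)
    then obtain z where z: "y = 121 * z"
      by (auto elim: dvdE)
    then have "z \<in> neg_squares (b - 2)"
      using y sq[of z] pow by (simp add: neg_squares_def)
    then show "y \<in> (\<lambda>z. 121 * z) ` neg_squares (b - 2)"
      using z by blast
  next
    fix y assume "y \<in> (\<lambda>z. 121 * z) ` neg_squares (b - 2)"
    then obtain z where "y = 121 * z" "z \<in> neg_squares (b - 2)"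
      by blast
    then show "y \<in> {y \<in> neg_squares b. 11 dvd y}"
      using sq[of z] pow by (auto simp: neg_squares_def)
  qed
qed

lemma card_neg_squares_multiples_11:
  assumes "2 \<le> b"
  shows "card {y \<in> neg_squares b. 11 dvd y} = card (neg_squares (b - 2))"
  unfolding neg_squares_multiples_11[OF assms] by (rule card_image) (simp add: inj_on_def)

lemma card_neg_squares:
  "24 * card (neg_squares b) = 11 ^ (b + 1) + (if even b then 13 else 23)"
proof (induction b rule: nat_less_induct)
  case (1 b)
  consider "b = 0" | "b = 1" | "2 \<le> b"
    by linarith
  then show ?case
  proof cases
    case 1
    then have "neg_squares b = {0}"
      by (auto simp: neg_squares_def QuadRes_def)
    then show ?thesis
      using 1 by simp
  next
    case 2
    then have "{y \<in> neg_squares b. 11 dvd y} = {0}"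
      by (auto simp: neg_squares_def QuadRes_def elim: dvdE intro: exI[of _ 0])
    then show ?thesis
      using card_neg_squares_split[of b] 2 by simp
  next
    case 3
    then obtain c where c: "b = Suc (Suc c)"
      using add_2_eq_Suc le_Suc_ex by blast
    have "card (neg_squares b) = 5 * 11 ^ Suc c + card (neg_squares c)"
      using card_neg_squares_split[of b] card_neg_squares_multiples_11[OF 3] c by simp
    moreover have "24 * card (neg_squares c) = 11 ^ (c + 1) + (if even c then 13 else 23)"
      using "1.IH" c by simp
    ultimately show ?thesis
      using c by simp
  qed
qed

text \<open>If r^2 \<equiv> 5, the affine map x \<mapsto> r x + 2 turns 5 x^2 - 4 into
  (r x + 2)(r x - 2) = y (y - 4), and for r \<equiv> 4 (mod 11) it maps the class 5 onto 0 mod 11.\<close>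

lemma sqrt5_affine_iff:
  fixes r :: int and x :: nat
  assumes a: "1 \<le> a" and r11: "r mod 11 = 4" and r5: "11 ^ a dvd r\<^sup>2 - 5"
  defines "y \<equiv> nat ((r * int x + 2) mod int (11 ^ a))"
  shows "x mod 11 = 5 \<and> QuadRes (11 ^ a) (5 * (int x)\<^sup>2 - 4) \<longleftrightarrow>
    11 dvd y \<and> QuadRes (11 ^ a) (- int y)"
proof -
  have y: "[int y = r * int x + 2] (mod 11 ^ a)"
    by (simp add: y_def cong_def)
  then have "[int y = r * int x + 2] (mod 11)"
    by (rule cong_dvd_modulus) (use a in simp)
  moreover have "[r * int x + 2 = 4 * (int x mod 11) + 2] (mod 11)"
    using r11 by (intro cong_add cong_mult cong_refl) (simp_all add: cong_def)
  ultimately have k: "int y mod 11 = (4 * (int x mod 11) + 2) mod 11"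
    unfolding cong_def by simp
  have x11: "int x mod 11 = int (x mod 11)"
    by (simp add: of_nat_mod)
  have "11 dvd int y \<longleftrightarrow> int x mod 11 = 5"
    unfolding dvd_eq_mod_eq_0 k by (cases "int x" rule: mod_11_cases) simp_all
  also have "\<dots> \<longleftrightarrow> x mod 11 = 5"
    unfolding x11 by simp
  finally have dvd: "11 dvd int y \<longleftrightarrow> x mod 11 = 5" .
  then have "11 dvd y \<longleftrightarrow> x mod 11 = 5"
    by (metis of_nat_dvd_iff of_nat_numeral)
  moreover have "QuadRes (11 ^ a) (5 * (int x)\<^sup>2 - 4) \<longleftrightarrow> QuadRes (11 ^ a) (- int y)"
    if "x mod 11 = 5"
    using QuadRes_five_sq_minus_four_shift[OF r5 y] QuadRes_11_power_mult_four_minus[OF a] dvd that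
    by simp
  ultimately show ?thesis
    by blast
qed

lemma card_fib_residues_5:
  assumes a: "2 \<le> a"
  shows "card {x. x < 11 ^ a \<and> x mod 11 = 5 \<and> QuadRes (11 ^ a) (5 * (int x)\<^sup>2 - 4)} =
    card {y \<in> neg_squares a. 11 dvd y}"
proof -
  obtain \<phi> :: int where \<phi>85: "[\<phi> = 85] (mod 121)" and \<phi>: "11 ^ a dvd \<phi>\<^sup>2 - \<phi> - 1"
    using golden_root_mod_11_power[OF a] by blast
  define r where "r = 2 * \<phi> - 1"
  have r11: "r mod 11 = 4"
    using golden_root_mod_11[OF \<phi>85] unfolding r_def
    by (simp add: mod_diff_left_eq[symmetric] mod_mult_right_eq[symmetric])
  have "r\<^sup>2 - 5 = 4 * (\<phi>\<^sup>2 - \<phi> - 1)"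
    unfolding r_def by (simp add: algebra_simps power2_eq_square)
  also have "11 ^ a dvd \<dots>"
    using \<phi> by (rule dvd_mult)
  finally have r5: "11 ^ a dvd r\<^sup>2 - 5" .
  have "coprime r (int (11 ^ a))"
    using r11 coprime_11_power[of r a] by (simp add: dvd_eq_mod_eq_0)
  then have "bij_betw (\<lambda>x. nat ((r * int x + 2) mod int (11 ^ a))) {..<11 ^ a} {..<11 ^ a}"
    by (rule bij_betw_affine_mod[rotated]) simp
  then have "card {x \<in> {..<11 ^ a}. x mod 11 = 5 \<and> QuadRes (11 ^ a) (5 * (int x)\<^sup>2 - 4)} =
      card {y \<in> {..<11 ^ a}. 11 dvd y \<and> QuadRes (11 ^ a) (- int y)}"
    by (rule card_Collect_bij_betw) (use sqrt5_affine_iff[OF _ r11 r5] a in simp)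
  then show ?thesis
    by (simp add: neg_squares_def conj_commute conj_left_commute)
qed

lemma fib_residues_eq_Un:
  assumes a: "2 \<le> a"
  shows "{fib n mod 11 ^ a | n. True} =
    {x. x < 11 ^ a \<and> x mod 11 \<in> {0, 1, 2, 3, 8, 10}} \<union>
    {x. x < 11 ^ a \<and> x mod 11 = 5 \<and> QuadRes (11 ^ a) (5 * (int x)\<^sup>2 - 4)}"
proof (rule Set.set_eqI)
  fix x :: nat
  have "x \<in> {fib n mod 11 ^ a | n. True} \<longleftrightarrow> x < 11 ^ a \<and> (\<exists>n. fib n mod 11 ^ a = x)"
    by auto
  also have "\<dots> \<longleftrightarrow> x < 11 ^ a \<and>
      (x mod 11 \<in> {0, 1, 2, 3, 8, 10} \<or> (x mod 11 = 5 \<and> QuadRes (11 ^ a) (5 * (int x)\<^sup>2 - 4)))"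
    using fib_residue_iff[OF a, of x] by (cases "x < 11 ^ a") simp_all
  finally show "x \<in> {fib n mod 11 ^ a | n. True} \<longleftrightarrow>
      x \<in> {x. x < 11 ^ a \<and> x mod 11 \<in> {0, 1, 2, 3, 8, 10}} \<union>
        {x. x < 11 ^ a \<and> x mod 11 = 5 \<and> QuadRes (11 ^ a) (5 * (int x)\<^sup>2 - 4)}"
    by (simp only: Un_iff mem_Collect_eq conj_disj_distribL)
qed

lemma card_fib_residues:
  assumes a: "2 \<le> a"
  shows "264 * card {fib n mod 11 ^ a | n. True} = 145 * 11 ^ a + 11 * (if even a then 13 else 23)"
proof -
  obtain c where c: "a = Suc (Suc c)"
    using a add_2_eq_Suc le_Suc_ex by blast
  define G1 where "G1 = {x::nat. x < 11 ^ a \<and> x mod 11 \<in> {0, 1, 2, 3, 8, 10}}"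
  define G2 where "G2 = {x. x < 11 ^ a \<and> x mod 11 = 5 \<and> QuadRes (11 ^ a) (5 * (int x)\<^sup>2 - 4)}"
  have "G1 \<inter> G2 = {}" "finite G1" "finite G2"
    by (auto simp: G1_def G2_def)
  moreover have "card G1 = 6 * 11 ^ Suc c"
  proof -
    have "(11::nat) ^ a = 11 * 11 ^ Suc c"
      by (simp add: c)
    then show ?thesis
      unfolding G1_def by (simp only:) (subst card_less_mult_mod_in, auto)
  qed
  moreover have "24 * card G2 = 11 ^ Suc c + (if even a then 13 else 23)"
    using card_neg_squares[of c]
    unfolding G2_def card_fib_residues_5[OF a] card_neg_squares_multiples_11[OF a] by (simp add: c)
  moreover have "{fib n mod 11 ^ a | n. True} = G1 \<union> G2"
    unfolding G1_def G2_def by (rule fib_residues_eq_Un[OF a])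
  ultimately show ?thesis
    by (simp add: card_Un_disjoint c)
qed

lemma fib_residue_density_bounds:
  assumes a: "2 \<le> a"
  defines "d \<equiv> real (card {fib n mod 11 ^ a | n. True}) / real (11 ^ a)"
  shows "145 / 264 \<le> d" "d \<le> 145 / 264 + (1 / 11) ^ a"
proof -
  define c :: real where "c = (if even a then 13 else 23)"
  have P: "(0::real) < 11 ^ a"
    by simp
  have "264 * real (card {fib n mod 11 ^ a | n. True}) = 145 * 11 ^ a + 11 * c"
    using arg_cong[OF card_fib_residues[OF a], of real] by (simp add: c_def)
  then have d: "d = 145 / 264 + 11 * c / 264 * (1 / 11) ^ a"
    unfolding d_def using P by (simp add: field_simps power_one_over)
  have "0 \<le> c" "11 * c / 264 \<le> 1"
    by (simp_all add: c_def)
  then show "145 / 264 \<le> d" "d \<le> 145 / 264 + (1 / 11) ^ a"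
    unfolding d by (simp_all add: mult_left_le_one_le)
qed

theorem theorem5p7:
  shows "(\<lambda>a::nat. real (card {fib n mod 11 ^ a | n. True}) / real (11 ^ a))
           \<longlonglongrightarrow> 145 / 264"
proof (rule tendsto_sandwich)
  show "\<forall>\<^sub>F a in sequentially. 145 / 264 \<le> real (card {fib n mod 11 ^ a | n. True}) / real (11 ^ a)"
    using fib_residue_density_bounds(1) by (intro eventually_sequentiallyI[of 2])
  show "\<forall>\<^sub>F a in sequentially.
      real (card {fib n mod 11 ^ a | n. True}) / real (11 ^ a) \<le> 145 / 264 + (1 / 11) ^ a"
    using fib_residue_density_bounds(2) by (intro eventually_sequentiallyI[of 2])
  show "(\<lambda>a. 145 / 264 + (1 / 11) ^ a) \<longlonglongrightarrow> (145 / 264 :: real)"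
    using tendsto_add[OF tendsto_const LIMSEQ_power_zero[of "1 / 11 :: real"]] by simp
qed simp

end
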